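(* Let $X$ be a real Banach space. (a) Let $x \in S(X)$ and $f \in S(X^* )$ be such that $f(x) > 0$ and, for some $0<t<2$, $s^*(f,x,t) > 0$. Then \[ \operatorname{diam}\big(S(B(X^* ), x, f(x)(1 - s^*(f,x,t)))\big) < 2t. \] (b) An element $f \in S(X^* )$ is a w*-denting point of $B(X^* )$ if and only if $d^*(f,t) > 0$ for all $0<t<2$.
   Context: $B(\cdot)$, $S(\cdot)$ denote closed unit ball and unit sphere. For $x \in S(X)$ and real $\alpha$, the w*-slice is $S(B(X^* ), x, \alpha) := \{g \in B(X^* ) : g(x) > \alpha\}$. An element $f \in S(X^* )$ is a w*-denting point of $B(X^* )$ if for every $\varepsilon>0$ there is a w*-slice $S(B(X^* ),x,\alpha)$ ($x\in S(X)$, $0<\alpha<1$) containing $f$ with diameter less than $\varepsilon$. For $0<t<2$, $f \in S(X^* )$, $x \in S(X)$: $s^*(f,x,t) := \inf\{\|f+h\| - 1 : h \in X^*,\ \|h\| \geq t/4,\ h(x) = 0\}$, and $d^*(f,t) := \sup_{x \in S(X)} s^*(f,x,t)$. *)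

theory Defs
  imports "HOL-Analysis.Analysis"
begin

definition wslice :: "'a::real_normed_vector \<Rightarrow> real \<Rightarrow> ('a \<Rightarrow>\<^sub>L real) set" where
  "wslice x \<alpha> = {g. norm g \<le> 1 \<and> blinfun_apply g x > \<alpha>}"

text \<open>s^*(f,x,t), valued in the extended reals (infimum of the empty set is +infinity).\<close>
definition s_star :: "('a::real_normed_vector \<Rightarrow>\<^sub>L real) \<Rightarrow> 'a \<Rightarrow> real \<Rightarrow> ereal" where
  "s_star f x t = (INF h \<in> {h. norm h \<ge> t / 4 \<and> blinfun_apply h x = 0}. ereal (norm (f + h) - 1))"

definition d_star :: "('a::real_normed_vector \<Rightarrow>\<^sub>L real) \<Rightarrow> real \<Rightarrow> ereal" where
  "d_star f t = (SUP x \<in> {x. norm x = 1}. s_star f x t)"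

definition w_star_denting :: "('a::real_normed_vector \<Rightarrow>\<^sub>L real) \<Rightarrow> bool" where
  "w_star_denting f \<longleftrightarrow> norm f = 1 \<and>
     (\<forall>\<epsilon>>0. \<exists>x \<alpha>. norm x = 1 \<and> 0 < \<alpha> \<and> \<alpha> < 1 \<and> f \<in> wslice x \<alpha> \<and> diameter (wslice x \<alpha>) < \<epsilon>)"

end

theory Submission
  imports Defs
begin

text \<open>
  (a) Write a functional \<open>g\<close> of the slice as \<open>g = a (f + h)\<close> with \<open>h(x) = 0\<close>. The hypothesis
  \<open>s\<^sup>*(f,x,t) > 0\<close> says that moving from \<open>f\<close> by \<open>t/4\<close> along the annihilator of \<open>x\<close> raises the
  norm by at least \<open>s\<^sup>*\<close>; by convexity of \<open>c \<mapsto> \<parallel>f + c h\<parallel>\<close> this bounds \<open>\<parallel>h\<parallel>\<close> by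
  \<open>(t/4)/(1 - s\<^sup>*)\<close>. Testing the same hypothesis on \<open>f(x) \<phi> - f\<close>, for a Hahn--Banach functional
  \<open>\<phi>\<close> norming \<open>x\<close>, gives \<open>f(x) > 1 - t/4\<close>, so the scale \<open>a\<close> is close to \<open>1\<close> and, for
  \<open>t \<le> 1\<close>, every \<open>g\<close> of the slice lies within \<open>7t/9\<close> of \<open>f\<close>; for \<open>t > 1\<close> the trivial bound \<open>2\<close>
  on the diameter suffices.

  (b) If \<open>f\<close> lies in a w*-slice of diameter \<open>< t/8\<close>, then any \<open>f + h\<close> with \<open>h(x) = 0\<close>,
  \<open>\<parallel>h\<parallel> \<ge> t/4\<close> and norm close to \<open>1\<close> would, after normalisation, lie in that slice and hence close
  to \<open>f\<close>; so \<open>s\<^sup>*(f,x,t) > 0\<close>. Conversely, (a) produces slices of diameter \<open>< 2t\<close>: replace \<open>x\<close>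
  by \<open>-x\<close> if necessary to get \<open>f(x) > 0\<close>, and use any \<open>0 < s \<le> min(s\<^sup>*, t/4)\<close> in place of
  \<open>s\<^sup>*\<close>, since the argument of (a) only needs a lower bound for \<open>s\<^sup>*\<close>.
\<close>

declare blinfun.add_left [simp] blinfun.diff_left [simp] blinfun.scaleR_left [simp]
  blinfun.minus_left [simp] blinfun.minus_right [simp]

text \<open>Linear functionals on subspaces dominated by the norm, represented by their graphs so that
  extension becomes set inclusion, the order in which Zorn's lemma is applied.\<close>

definition dominated_linear_graph :: "('a::real_normed_vector \<times> real) set \<Rightarrow> bool" where
  "dominated_linear_graph G \<longleftrightarrow>
     (\<forall>y a b. (y, a) \<in> G \<longrightarrow> (y, b) \<in> G \<longrightarrow> a = b) \<and>
     (\<forall>y a z b. (y, a) \<in> G \<longrightarrow> (z, b) \<in> G \<longrightarrow> (y + z, a + b) \<in> G) \<and>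
     (\<forall>y a c. (y, a) \<in> G \<longrightarrow> (c *\<^sub>R y, c * a) \<in> G) \<and>
     (\<forall>y a. (y, a) \<in> G \<longrightarrow> a \<le> norm y)"

lemma dominated_linear_graphD:
  assumes "dominated_linear_graph G"
  shows "\<And>y a b. (y, a) \<in> G \<Longrightarrow> (y, b) \<in> G \<Longrightarrow> a = b"
    and "\<And>y a z b. (y, a) \<in> G \<Longrightarrow> (z, b) \<in> G \<Longrightarrow> (y + z, a + b) \<in> G"
    and "\<And>y a c. (y, a) \<in> G \<Longrightarrow> (c *\<^sub>R y, c * a) \<in> G"
    and "\<And>y a. (y, a) \<in> G \<Longrightarrow> a \<le> norm y"
  using assms unfolding dominated_linear_graph_def by blast+

lemma dominated_linear_graph_Union_chain:
  assumes C: "C \<in> chains A" "C \<noteq> {}" and A: "\<And>G. G \<in> A \<Longrightarrow> dominated_linear_graph G"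
  shows "dominated_linear_graph (\<Union>C)"
proof -
  have dom: "\<And>G. G \<in> C \<Longrightarrow> dominated_linear_graph G"
    using C chainsD2 A by blast
  have common: "\<exists>G\<in>C. p \<in> G \<and> q \<in> G" if "p \<in> \<Union>C" "q \<in> \<Union>C" for p q
    using that chainsD[OF C(1)] by blast
  show ?thesis unfolding dominated_linear_graph_def
  proof (intro conjI allI impI)
    fix y a b assume "(y, a) \<in> \<Union>C" "(y, b) \<in> \<Union>C"
    then show "a = b" using common dominated_linear_graphD(1)[OF dom] by metis
  next
    fix y a z b assume "(y, a) \<in> \<Union>C" "(z, b) \<in> \<Union>C"
    then show "(y + z, a + b) \<in> \<Union>C" using common dominated_linear_graphD(2)[OF dom] by blast
  next
    fix y a c assume "(y, a) \<in> \<Union>C"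
    then show "(c *\<^sub>R y, c * a) \<in> \<Union>C" using dominated_linear_graphD(3)[OF dom] by blast
  next
    fix y a assume "(y, a) \<in> \<Union>C"
    then show "a \<le> norm y" using dominated_linear_graphD(4)[OF dom] by blast
  qed
qed

text \<open>The one-step extension of Hahn--Banach: the new value \<open>w\<close> at \<open>z\<close> has to lie between
  \<open>a - \<parallel>y - z\<parallel>\<close> and \<open>\<parallel>y + z\<parallel> - a\<close> for all \<open>(y, a)\<close> in the graph.\<close>

lemma add_scaleR_le_norm_if_squeezed:
  assumes G: "dominated_linear_graph G" "(y, a) \<in> G"
    and w_lower: "\<And>y a. (y, a) \<in> G \<Longrightarrow> a - norm (y - z) \<le> w"
    and w_upper: "\<And>y a. (y, a) \<in> G \<Longrightarrow> w \<le> norm (y + z) - a"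
  shows "a + c * w \<le> norm (y + c *\<^sub>R z)"
proof (cases c "0::real" rule: linorder_cases)
  case equal
  then show ?thesis using dominated_linear_graphD(4)[OF G] by simp
next
  case greater
  have "w \<le> norm ((1/c) *\<^sub>R y + z) - (1/c) * a"
    by (rule w_upper[OF dominated_linear_graphD(3)[OF G]])
  also have "(1/c) *\<^sub>R y + z = (1/c) *\<^sub>R (y + c *\<^sub>R z)" using greater by (simp add: algebra_simps)
  finally have "c * w \<le> c * (norm ((1/c) *\<^sub>R (y + c *\<^sub>R z)) - (1/c) * a)" using greater by simp
  also have "\<dots> = norm (y + c *\<^sub>R z) - a" using greater by (simp add: right_diff_distrib)
  finally show ?thesis by simp
next
  case less
  define d where "d = - c"
  have d: "0 < d" using less by (simp add: d_def)
  have "(1/d) * a - norm ((1/d) *\<^sub>R y - z) \<le> w"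
    by (rule w_lower[OF dominated_linear_graphD(3)[OF G]])
  also have "(1/d) *\<^sub>R y - z = (1/d) *\<^sub>R (y + c *\<^sub>R z)" using d by (simp add: d_def algebra_simps)
  finally have "d * ((1/d) * a - norm ((1/d) *\<^sub>R (y + c *\<^sub>R z))) \<le> d * w" using d by simp
  then have "a - norm (y + c *\<^sub>R z) \<le> d * w" using d by (simp add: right_diff_distrib)
  then show ?thesis by (simp add: d_def)
qed

lemma dominated_linear_graph_adjoin:
  assumes G: "dominated_linear_graph G" and z: "\<And>a. (z, a) \<notin> G"
    and w_lower: "\<And>y a. (y, a) \<in> G \<Longrightarrow> a - norm (y - z) \<le> w"
    and w_upper: "\<And>y a. (y, a) \<in> G \<Longrightarrow> w \<le> norm (y + z) - a"
  shows "dominated_linear_graph {(y + c *\<^sub>R z, a + c * w) | y a c. (y, a) \<in> G}"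
    (is "dominated_linear_graph ?G'")
  unfolding dominated_linear_graph_def
proof (intro conjI allI impI)
  note fn = dominated_linear_graphD(1)[OF G] and add = dominated_linear_graphD(2)[OF G]
    and sc = dominated_linear_graphD(3)[OF G]
  fix v a b assume "(v, a) \<in> ?G'" "(v, b) \<in> ?G'"
  then obtain y1 a1 c1 y2 a2 c2 where 1: "(y1, a1) \<in> G" "v = y1 + c1 *\<^sub>R z" "a = a1 + c1 * w"
    and 2: "(y2, a2) \<in> G" "v = y2 + c2 *\<^sub>R z" "b = a2 + c2 * w" by blast
  show "a = b"
  proof (cases "c1 = c2")
    case True
    then show ?thesis using 1 2 fn by auto
  next
    case False
    have "z = (1 / (c2 - c1)) *\<^sub>R ((c2 - c1) *\<^sub>R z)" using False by simp
    also have "(c2 - c1) *\<^sub>R z = y1 + (-1) *\<^sub>R y2" using 1 2 by (simp add: algebra_simps)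
    finally have z_eq: "z = (1 / (c2 - c1)) *\<^sub>R (y1 + (-1) *\<^sub>R y2)" .
    have "(z, (1 / (c2 - c1)) * (a1 + (-1) * a2)) \<in> G"
      unfolding z_eq by (rule sc, rule add, rule 1(1), rule sc, rule 2(1))
    with z show ?thesis by blast
  qed
next
  fix v a u b assume "(v, a) \<in> ?G'" "(u, b) \<in> ?G'"
  then obtain y1 a1 c1 y2 a2 c2 where "(y1, a1) \<in> G" "v = y1 + c1 *\<^sub>R z" "a = a1 + c1 * w"
    and "(y2, a2) \<in> G" "u = y2 + c2 *\<^sub>R z" "b = a2 + c2 * w" by blast
  then have "(v + u, a + b) = ((y1 + y2) + (c1 + c2) *\<^sub>R z, (a1 + a2) + (c1 + c2) * w)"
    "(y1 + y2, a1 + a2) \<in> G"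
    using dominated_linear_graphD(2)[OF G] by (auto simp: algebra_simps)
  then show "(v + u, a + b) \<in> ?G'" by blast
next
  fix v a c assume "(v, a) \<in> ?G'"
  then obtain y a1 c1 where "(y, a1) \<in> G" "v = y + c1 *\<^sub>R z" "a = a1 + c1 * w" by blast
  then have "(c *\<^sub>R v, c * a) = (c *\<^sub>R y + (c * c1) *\<^sub>R z, c * a1 + (c * c1) * w)"
    "(c *\<^sub>R y, c * a1) \<in> G"
    using dominated_linear_graphD(3)[OF G] by (auto simp: algebra_simps)
  then show "(c *\<^sub>R v, c * a) \<in> ?G'" by blast
next
  fix v a assume "(v, a) \<in> ?G'"
  then show "a \<le> norm v"
    using add_scaleR_le_norm_if_squeezed[OF G _ w_lower w_upper] by blast
qed

lemma dominated_linear_graph_extend: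
  assumes G: "dominated_linear_graph G" "G \<noteq> {}" and z: "\<And>a. (z, a) \<notin> G"
  shows "\<exists>G'. dominated_linear_graph G' \<and> G \<subset> G'"
proof -
  have squeeze: "a1 - norm (y1 - z) \<le> norm (y2 + z) - a2" if "(y1, a1) \<in> G" "(y2, a2) \<in> G"
    for y1 a1 y2 a2
  proof -
    have "a1 + a2 \<le> norm ((y1 - z) + (y2 + z))"
      using dominated_linear_graphD(4)[OF G(1) dominated_linear_graphD(2)[OF G(1) that]] by simp
    then show ?thesis using norm_triangle_ineq[of "y1 - z" "y2 + z"] by simp
  qed
  define S where "S = (\<lambda>(y, a). a - norm (y - z)) ` G"
  define w where "w = Sup S"
  obtain y0 a0 where "(y0, a0) \<in> G" using G(2) by auto
  then have "bdd_above S" unfolding S_def using squeeze by (intro bdd_aboveI) fastforce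
  then have w_lower: "a - norm (y - z) \<le> w" if "(y, a) \<in> G" for y a
    unfolding w_def using that S_def by (intro cSup_upper) auto
  have w_upper: "w \<le> norm (y + z) - a" if "(y, a) \<in> G" for y a
    unfolding w_def using G(2) squeeze that S_def by (intro cSup_least) auto
  define G' where "G' = {(y + c *\<^sub>R z, a + c * w) | y a c. (y, a) \<in> G}"
  have "dominated_linear_graph G'"
    unfolding G'_def using G(1) z w_lower w_upper by (rule dominated_linear_graph_adjoin)
  moreover have "G \<subseteq> G'" unfolding G'_def by force
  moreover have "(z, w) \<in> G'"
  proof -
    have "(0, 0) \<in> G" using dominated_linear_graphD(3)[OF G(1) \<open>(y0, a0) \<in> G\<close>, of 0] by simp
    then show ?thesis unfolding G'_def by force
  qed
  ultimately show ?thesis using z by blast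
qed

lemma dominated_linear_graph_span:
  fixes x :: "'a::real_normed_vector"
  assumes "x \<noteq> 0"
  shows "dominated_linear_graph (range (\<lambda>c. (c *\<^sub>R x, c * norm x)))" (is "dominated_linear_graph ?L")
  unfolding dominated_linear_graph_def
proof (intro conjI allI impI)
  fix y a b assume "(y, a) \<in> ?L" "(y, b) \<in> ?L"
  then obtain c d where "y = c *\<^sub>R x" "a = c * norm x" "y = d *\<^sub>R x" "b = d * norm x" by blast
  then show "a = b" using assms by simp
next
  fix y a z b assume "(y, a) \<in> ?L" "(z, b) \<in> ?L"
  then obtain c d where "y = c *\<^sub>R x" "a = c * norm x" "z = d *\<^sub>R x" "b = d * norm x" by blast
  then have "(y + z, a + b) = (\<lambda>c. (c *\<^sub>R x, c * norm x)) (c + d)"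
    by (simp add: scaleR_add_left distrib_right)
  then show "(y + z, a + b) \<in> ?L" by (rule range_eqI)
next
  fix y a e assume "(y, a) \<in> ?L"
  then obtain c where "y = c *\<^sub>R x" "a = c * norm x" by blast
  then have "(e *\<^sub>R y, e * a) = (\<lambda>c. (c *\<^sub>R x, c * norm x)) (e * c)" by simp
  then show "(e *\<^sub>R y, e * a) \<in> ?L" by (rule range_eqI)
next
  fix y a assume "(y, a) \<in> ?L"
  then obtain c where "y = c *\<^sub>R x" "a = c * norm x" by blast
  then show "a \<le> norm y" by (simp add: mult_right_mono)
qed

lemma exists_total_dominated_linear_graph:
  assumes G0: "dominated_linear_graph G0" "G0 \<noteq> {}"
  shows "\<exists>M. dominated_linear_graph M \<and> G0 \<subseteq> M \<and> (\<forall>y. \<exists>a. (y, a) \<in> M)"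
proof -
  define A where "A = {G. dominated_linear_graph G \<and> G0 \<subseteq> G}"
  have "\<exists>M\<in>A. \<forall>X\<in>A. M \<subseteq> X \<longrightarrow> X = M"
  proof (rule Zorn_Lemma2, intro ballI)
    fix C assume C: "C \<in> chains A"
    show "\<exists>U\<in>A. \<forall>X\<in>C. X \<subseteq> U"
    proof (cases "C = {}")
      case True then show ?thesis using G0(1) unfolding A_def by blast
    next
      case False
      then obtain G where "G \<in> C" by blast
      then have "G0 \<subseteq> \<Union>C" using chainsD2[OF C] unfolding A_def by blast
      moreover have "dominated_linear_graph (\<Union>C)"
        using dominated_linear_graph_Union_chain[OF C False] unfolding A_def by blast
      ultimately have "\<Union>C \<in> A" unfolding A_def by blast
      then show ?thesis by blast
    qed
  qed
  then obtain M where "M \<in> A" and M_max: "\<forall>X\<in>A. M \<subseteq> X \<longrightarrow> X = M" by blast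
  then have M: "dominated_linear_graph M" "G0 \<subseteq> M" unfolding A_def by auto
  have maximal: False if "dominated_linear_graph X" "M \<subset> X" for X
  proof -
    have "X \<in> A" using that M(2) unfolding A_def by auto
    then show False using M_max that(2) by blast
  qed
  have "M \<noteq> {}" using M(2) G0(2) by blast
  then have "\<exists>a. (y, a) \<in> M" for y
    using dominated_linear_graph_extend[OF M(1)] maximal by blast
  with M show ?thesis by blast
qed

lemma blinfun_of_total_dominated_linear_graph:
  fixes M :: "('a::real_normed_vector \<times> real) set"
  assumes M: "dominated_linear_graph M" and total: "\<And>y. \<exists>a. (y, a) \<in> M"
  shows "\<exists>\<phi>::'a \<Rightarrow>\<^sub>L real. norm \<phi> \<le> 1 \<and> (\<forall>y a. (y, a) \<in> M \<longrightarrow> blinfun_apply \<phi> y = a)"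
proof -
  note fn = dominated_linear_graphD(1)[OF M] and add = dominated_linear_graphD(2)[OF M]
    and sc = dominated_linear_graphD(3)[OF M] and dom = dominated_linear_graphD(4)[OF M]
  define p where "p y = (THE a. (y, a) \<in> M)" for y
  have pM: "(y, p y) \<in> M" for y
  proof -
    obtain a where a: "(y, a) \<in> M" using total by blast
    show ?thesis unfolding p_def using a by (rule theI) (use a fn in blast)
  qed
  have p_eq: "p y = a" if "(y, a) \<in> M" for y a
    using fn[OF that pM] by simp
  have bound: "\<bar>p y\<bar> \<le> norm y" for y
    using dom[OF pM[of y]] dom[OF sc[OF pM[of y], of "-1"]] by simp
  have "bounded_linear p"
  proof (rule bounded_linear_intro)
    show "p (y + z) = p y + p z" for y z using p_eq[OF add[OF pM pM]] .
    show "p (c *\<^sub>R y) = c *\<^sub>R p y" for c y using p_eq[OF sc[OF pM]] by simp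
    show "norm (p y) \<le> norm y * 1" for y using bound[of y] by simp
  qed
  then have Bp: "blinfun_apply (Blinfun p) = p" by (rule bounded_linear_Blinfun_apply)
  moreover have "norm (Blinfun p) \<le> 1" using Bp bound by (intro norm_blinfun_bound) auto
  ultimately show ?thesis using p_eq by auto
qed

lemma exists_norming_functional:
  fixes x :: "'a::real_normed_vector"
  shows "\<exists>\<phi>::'a \<Rightarrow>\<^sub>L real. norm \<phi> \<le> 1 \<and> blinfun_apply \<phi> x = norm x"
proof (cases "x = 0")
  case True
  then show ?thesis by (intro exI[of _ 0]) simp
next
  case False
  let ?L = "range (\<lambda>c. (c *\<^sub>R x, c * norm x))"
  obtain M where "dominated_linear_graph M" "?L \<subseteq> M" "\<forall>y. \<exists>a. (y, a) \<in> M"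
    using exists_total_dominated_linear_graph[OF dominated_linear_graph_span[OF False]] by blast
  moreover have "(x, norm x) \<in> ?L" by (rule range_eqI[of _ _ 1]) simp
  ultimately show ?thesis using blinfun_of_total_dominated_linear_graph[of M] by blast
qed

lemma blinfun_apply_le_norm:
  fixes f :: "'a::real_normed_vector \<Rightarrow>\<^sub>L real"
  shows "blinfun_apply f x \<le> norm f * norm x"
  using norm_blinfun[of f x] by (simp add: abs_le_iff)

lemma bounded_wslice: "bounded (wslice x \<alpha>)"
  by (rule bounded_subset[OF bounded_cball[of 0 1]]) (auto simp: wslice_def)

lemma s_star_le:
  assumes "t / 4 \<le> norm h" "blinfun_apply h x = 0"
  shows "s_star f x t \<le> ereal (norm (f + h) - 1)"
  unfolding s_star_def using assms by (intro INF_lower) auto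

lemma ereal_le_s_star_iff:
  "ereal s \<le> s_star f x t \<longleftrightarrow>
     (\<forall>h. t / 4 \<le> norm h \<longrightarrow> blinfun_apply h x = 0 \<longrightarrow> s \<le> norm (f + h) - 1)"
  unfolding s_star_def by (auto simp: le_INF_iff)

lemma s_star_le_quarter:
  fixes f :: "'a::real_normed_vector \<Rightarrow>\<^sub>L real"
  assumes f: "norm f = 1" and t: "0 < t" and fin: "s_star f x t < \<infinity>"
  shows "s_star f x t \<le> ereal (t / 4)"
proof -
  have "\<exists>h::'a \<Rightarrow>\<^sub>L real. t / 4 \<le> norm h \<and> blinfun_apply h x = 0"
  proof (rule ccontr)
    assume "\<not> ?thesis"
    then have "{h::'a \<Rightarrow>\<^sub>L real. t / 4 \<le> norm h \<and> blinfun_apply h x = 0} = {}" by blast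
    then have "s_star f x t = \<infinity>" unfolding s_star_def by (simp only: INF_empty top_ereal_def)
    with fin show False by simp
  qed
  then obtain h :: "'a \<Rightarrow>\<^sub>L real" where h: "t / 4 \<le> norm h" "blinfun_apply h x = 0"
    by blast
  define h' where "h' = (t / 4 / norm h) *\<^sub>R h"
  have "0 < norm h" using h(1) t by linarith
  then have h': "norm h' = t / 4" using t by (simp add: h'_def)
  then have "s_star f x t \<le> ereal (norm (f + h') - 1)"
    using h(2) by (intro s_star_le) (simp_all add: h'_def)
  also have "ereal (norm (f + h') - 1) \<le> ereal (t / 4)"
    using norm_triangle_ineq[of f h'] f h' by simp
  finally show ?thesis .
qed

lemma s_star_uminus: "s_star f (- x) t = s_star f x t"
  unfolding s_star_def by simp

lemma blinfun_apply_neq_0_if_s_star_pos: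
  fixes f :: "'a::real_normed_vector \<Rightarrow>\<^sub>L real"
  assumes "norm f = 1" "t \<le> 4" "0 < s_star f x t"
  shows "blinfun_apply f x \<noteq> 0"
proof
  assume "blinfun_apply f x = 0"
  then have "s_star f x t \<le> ereal (- 1)"
    using s_star_le[of t "- f" x f] assms(1,2) by simp
  with assms(3) have "0 < ereal (- 1)" by (rule less_le_trans)
  then show False by simp
qed

lemma norm_add_scaleR_sub_one_le:
  fixes f h :: "'a::real_normed_vector"
  assumes "norm f = 1" "0 \<le> c" "c \<le> 1"
  shows "norm (f + c *\<^sub>R h) - 1 \<le> c * (norm (f + h) - 1)"
proof -
  have "f + c *\<^sub>R h = (1 - c) *\<^sub>R f + c *\<^sub>R (f + h)" by (simp add: algebra_simps)
  then have "norm (f + c *\<^sub>R h) \<le> (1 - c) * norm f + c * norm (f + h)"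
    using norm_triangle_ineq[of "(1 - c) *\<^sub>R f" "c *\<^sub>R (f + h)"] assms(2,3) by simp
  then show ?thesis using assms(1) by (simp add: algebra_simps)
qed

lemma norm_lt_if_ereal_le_s_star:
  fixes f h :: "'a::real_normed_vector \<Rightarrow>\<^sub>L real"
  assumes f: "norm f = 1" and t: "0 < t" and s: "0 < s" "s < 1" "ereal s \<le> s_star f x t"
    and h: "blinfun_apply h x = 0" "norm (f + h) < 1 / (1 - s)"
  shows "norm h < t / 4 / (1 - s)"
proof (cases "norm h < t / 4")
  case True
  moreover have "t / 4 \<le> t / 4 / (1 - s)" using t s by (simp add: field_simps)
  ultimately show ?thesis by linarith
next
  case False
  define c where "c = t / 4 / norm h"
  have "0 < norm h" using False t by linarith
  then have c: "0 < c" "c \<le> 1" using False t by (simp_all add: c_def)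
  have "t / 4 \<le> norm (c *\<^sub>R h)" using \<open>0 < norm h\<close> t by (simp add: c_def)
  then have "s \<le> norm (f + c *\<^sub>R h) - 1" using s(3) h(1) by (simp add: ereal_le_s_star_iff)
  also have "\<dots> \<le> c * (norm (f + h) - 1)" using f c by (intro norm_add_scaleR_sub_one_le) auto
  also have "\<dots> < c * (1 / (1 - s) - 1)" using c h(2) by simp
  also have "1 / (1 - s) - 1 = s / (1 - s)" using s by (simp add: field_simps)
  finally have "s * (1 - s) < s * c" using s by (simp add: field_simps)
  then have "1 - s < c" using s(1) by simp
  then have "(1 - s) * norm h < t / 4" using \<open>0 < norm h\<close> by (simp add: c_def field_simps)
  then show ?thesis using s by (simp add: field_simps)
qed

lemma one_sub_quarter_lt_apply_if_ereal_le_s_star: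
  fixes x :: "'a::real_normed_vector" and f :: "'a \<Rightarrow>\<^sub>L real"
  assumes x: "norm x = 1" and f: "norm f = 1" "0 < blinfun_apply f x"
    and s: "0 < s" "ereal s \<le> s_star f x t"
  shows "1 - t / 4 < blinfun_apply f x"
proof -
  define F where "F = blinfun_apply f x"
  obtain \<phi> :: "'a \<Rightarrow>\<^sub>L real" where \<phi>: "norm \<phi> \<le> 1" "blinfun_apply \<phi> x = 1"
    using exists_norming_functional[of x] x by auto
  define h where "h = F *\<^sub>R \<phi> - f"
  have F_\<phi>: "norm (F *\<^sub>R \<phi>) \<le> F" using \<phi>(1) f(2) by (simp add: F_def mult_left_le)
  have "F \<le> 1" using blinfun_apply_le_norm[of f x] x f(1) by (simp add: F_def)
  have "norm h < t / 4"
  proof (rule ccontr)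
    assume "\<not> norm h < t / 4"
    moreover have "blinfun_apply h x = 0" using \<phi>(2) by (simp add: h_def F_def)
    ultimately have "s \<le> norm (f + h) - 1" using s(2) by (simp add: ereal_le_s_star_iff)
    then show False using F_\<phi> \<open>F \<le> 1\<close> s(1) by (simp add: h_def)
  qed
  have "1 = norm (F *\<^sub>R \<phi> - h)" using f(1) by (simp add: h_def)
  also have "\<dots> \<le> norm (F *\<^sub>R \<phi>) + norm h" by (rule norm_triangle_ineq4)
  finally show ?thesis using F_\<phi> \<open>norm h < t / 4\<close> by (simp add: F_def)
qed

lemma mem_wslice_eq_scaleR_add:
  fixes x :: "'a::real_normed_vector" and f :: "'a \<Rightarrow>\<^sub>L real"
  assumes x: "norm x = 1" and f: "norm f = 1" "0 < blinfun_apply f x" and t: "0 < t"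
    and s: "0 < s" "s < 1" "ereal s \<le> s_star f x t"
    and g: "g \<in> wslice x (blinfun_apply f x * (1 - s))"
  shows "\<exists>a h. g = a *\<^sub>R (f + h) \<and> 1 - s < a \<and> a \<le> 1 / blinfun_apply f x \<and>
    norm h < t / 4 / (1 - s)"
proof -
  define F where "F = blinfun_apply f x"
  have g: "norm g \<le> 1" "F * (1 - s) < blinfun_apply g x" using g by (simp_all add: wslice_def F_def)
  define a where "a = blinfun_apply g x / F"
  have a: "1 - s < a" "a \<le> 1 / F"
    using g blinfun_apply_le_norm[of g x] x f(2) by (simp_all add: a_def F_def field_simps)
  have "0 < a" using a(1) s(2) by linarith
  define h where "h = (1 / a) *\<^sub>R g - f"
  have "norm (f + h) \<le> 1 / a" using g(1) \<open>0 < a\<close> by (simp add: h_def divide_right_mono)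
  also have "\<dots> < 1 / (1 - s)" using a(1) s by (simp add: frac_less2)
  finally have fh: "norm (f + h) < 1 / (1 - s)" .
  have "blinfun_apply g x \<noteq> 0" using \<open>0 < a\<close> by (auto simp: a_def)
  then have "blinfun_apply h x = 0" by (simp add: h_def a_def F_def)
  then have "norm h < t / 4 / (1 - s)" by (rule norm_lt_if_ereal_le_s_star[OF f(1) t s _ fh])
  moreover have "g = a *\<^sub>R (f + h)" using \<open>0 < a\<close> by (simp add: h_def)
  ultimately show ?thesis using a by (auto simp: F_def)
qed

lemma norm_diff_le_if_mem_wslice:
  fixes x :: "'a::real_normed_vector" and f :: "'a \<Rightarrow>\<^sub>L real"
  assumes x: "norm x = 1" and f: "norm f = 1" "0 < blinfun_apply f x"
    and t: "0 < t" "t \<le> 1" and s: "0 < s" "s \<le> t / 4" "ereal s \<le> s_star f x t"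
    and g: "g \<in> wslice x (blinfun_apply f x * (1 - s))"
  shows "norm (g - f) \<le> 7 / 9 * t"
proof -
  define F u where "F = blinfun_apply f x" and "u = t / 4"
  have u: "0 < u" "u \<le> 1 / 4" "s \<le> u" using t s(2) by (simp_all add: u_def)
  obtain a h where g: "g = a *\<^sub>R (f + h)" and a: "1 - s < a" "a \<le> 1 / F"
    and h: "norm h < u / (1 - s)"
    using mem_wslice_eq_scaleR_add[OF x f t(1) s(1) _ s(3) g] u by (auto simp: F_def u_def)
  have F: "1 - u < F" "0 < F" using one_sub_quarter_lt_apply_if_ereal_le_s_star[OF x f s(1,3)] f(2)
    by (simp_all add: F_def u_def)
  have inv_F: "1 / F \<le> 4 / 3" using F u by (simp add: field_simps)
  have "\<bar>a - 1\<bar> \<le> 4 / 3 * u"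
  proof -
    have "a - 1 \<le> (1 - F) / F" using a(2) F(2) by (simp add: field_simps)
    also have "\<dots> \<le> u * (1 / F)" using F by (simp add: divide_right_mono)
    also have "\<dots> \<le> u * (4 / 3)" using inv_F u by (intro mult_left_mono) auto
    finally show ?thesis using a(1) u by linarith
  qed
  moreover have "a * norm h \<le> 4 / 3 * (4 / 3 * u)"
  proof (rule mult_mono)
    show "a \<le> 4 / 3" using a(2) inv_F by linarith
    have "1 / (1 - s) \<le> 4 / 3" using u by (simp add: field_simps)
    then have "u * (1 / (1 - s)) \<le> u * (4 / 3)" using u by (intro mult_left_mono) auto
    then have "u / (1 - s) \<le> 4 / 3 * u" by simp
    then show "norm h \<le> 4 / 3 * u" using h by linarith
  qed (use a(1) u in auto)
  moreover have "norm (g - f) \<le> \<bar>a - 1\<bar> + a * norm h"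
  proof -
    have "g - f = (a - 1) *\<^sub>R f + a *\<^sub>R h" by (simp add: g algebra_simps)
    moreover have "0 < a" using a(1) u by linarith
    ultimately show ?thesis
      using norm_triangle_ineq[of "(a - 1) *\<^sub>R f" "a *\<^sub>R h"] f(1) by simp
  qed
  ultimately show ?thesis by (simp add: u_def)
qed

lemma diameter_wslice_lt:
  fixes x :: "'a::real_normed_vector" and f :: "'a \<Rightarrow>\<^sub>L real"
  assumes x: "norm x = 1" and f: "norm f = 1" "0 < blinfun_apply f x"
    and t: "0 < t" and s: "0 < s" "s \<le> t / 4" "ereal s \<le> s_star f x t"
  shows "diameter (wslice x (blinfun_apply f x * (1 - s))) < 2 * t"
proof (cases "t \<le> 1")
  case True
  let ?S = "wslice x (blinfun_apply f x * (1 - s))"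
  have "f \<in> ?S" using f s(1) by (simp add: wslice_def)
  have "diameter ?S \<le> 14 / 9 * t"
  proof (rule diameter_le)
    fix g1 g2 assume "g1 \<in> ?S" "g2 \<in> ?S"
    then have "norm (g1 - f) \<le> 7 / 9 * t" "norm (g2 - f) \<le> 7 / 9 * t"
      using norm_diff_le_if_mem_wslice[OF x f t True s] by blast+
    moreover have "norm (g1 - g2) \<le> norm (g1 - f) + norm (g2 - f)"
      using norm_triangle_ineq4[of "g1 - f" "g2 - f"] by simp
    ultimately show "norm (g1 - g2) \<le> 14 / 9 * t" by simp
  qed (use \<open>f \<in> ?S\<close> in blast)
  then show ?thesis using t by simp
next
  case False
  have "diameter (wslice x (blinfun_apply f x * (1 - s))) \<le> 2"
  proof (rule diameter_le)
    fix g1 g2 assume "g1 \<in> wslice x (blinfun_apply f x * (1 - s))"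
      and "g2 \<in> wslice x (blinfun_apply f x * (1 - s))"
    then show "norm (g1 - g2) \<le> 2"
      using norm_triangle_ineq4[of g1 g2] by (simp add: wslice_def)
  qed simp
  then show ?thesis using False by simp
qed

lemma s_star_pos_if_small_wslice:
  fixes x :: "'a::real_normed_vector" and f :: "'a \<Rightarrow>\<^sub>L real"
  assumes f: "norm f = 1" "f \<in> wslice x a" and a: "0 < a" and t: "0 < t" "t < 2"
    and diam: "diameter (wslice x a) < t / 8"
  shows "0 < s_star f x t"
proof -
  define F where "F = blinfun_apply f x"
  have "a < F" using f(2) by (simp add: wslice_def F_def)
  define \<delta> where "\<delta> = min ((F - a) / (2 * a)) (t / 16)"
  have \<delta>: "0 < \<delta>" "\<delta> \<le> t / 16" "a * (1 + \<delta>) < F"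
  proof -
    have "a * \<delta> \<le> a * ((F - a) / (2 * a))" using a by (intro mult_left_mono) (auto simp: \<delta>_def)
    also have "\<dots> = (F - a) / 2" using a by simp
    finally show "a * (1 + \<delta>) < F" using \<open>a < F\<close> by (simp add: distrib_left)
  qed (use a t \<open>a < F\<close> in \<open>auto simp: \<delta>_def\<close>)
  have close: "norm (g - f) < t / 8" if "g \<in> wslice x a" for g
    using diameter_bounded_bound[OF bounded_wslice that f(2)] diam by (simp add: dist_norm)
  have "\<delta> \<le> norm (f + h) - 1" if h: "t / 4 \<le> norm h" "blinfun_apply h x = 0" for h
  proof (rule ccontr)
    assume "\<not> \<delta> \<le> norm (f + h) - 1"
    define m where "m = max (norm (f + h)) 1"
    have m: "1 \<le> m" "m < 1 + \<delta>" "norm (f + h) \<le> m"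
      using \<open>\<not> \<delta> \<le> norm (f + h) - 1\<close> \<delta>(1) by (auto simp: m_def)
    define g where "g = (1 / m) *\<^sub>R (f + h)"
    have "a * m < a * (1 + \<delta>)" using m(2) a by simp
    then have "a * m < F" using \<delta>(3) by linarith
    moreover have "norm g \<le> 1" using m by (simp add: g_def)
    ultimately have "g \<in> wslice x a"
      using m h(2) by (simp add: wslice_def g_def F_def field_simps)
    then have "norm (g - f) < t / 8" by (rule close)
    have "h = m *\<^sub>R (g - f) + (m - 1) *\<^sub>R f" using m(1) by (simp add: g_def algebra_simps)
    then have "norm h \<le> m * norm (g - f) + (m - 1)"
      using norm_triangle_ineq[of "m *\<^sub>R (g - f)" "(m - 1) *\<^sub>R f"] m(1) f(1) by simp
    also have "\<dots> \<le> (1 + \<delta>) * (t / 8) + \<delta>"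
      using \<open>norm (g - f) < t / 8\<close> m by (intro add_mono mult_mono) auto
    also have "\<dots> \<le> (1 + 1 / 8) * (t / 8) + t / 16"
      using \<delta> t by (intro add_mono mult_right_mono) auto
    finally show False using h(1) t by simp
  qed
  then have "ereal \<delta> \<le> s_star f x t" by (simp add: ereal_le_s_star_iff)
  moreover have "0 < ereal \<delta>" using \<delta>(1) by simp
  ultimately show ?thesis by (metis less_le_trans)
qed

lemma d_star_pos_if_w_star_denting:
  assumes "w_star_denting f" "0 < t" "t < 2"
  shows "0 < d_star f t"
proof -
  have f: "norm f = 1" and "0 < t / 8" using assms(1,2) by (simp_all add: w_star_denting_def)
  then obtain x a where x: "norm x = 1" and a: "0 < a" "f \<in> wslice x a" "diameter (wslice x a) < t / 8"
    using assms(1) unfolding w_star_denting_def by blast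
  have "0 < s_star f x t" by (rule s_star_pos_if_small_wslice[OF f a(2) a(1) assms(2,3) a(3)])
  also have "s_star f x t \<le> d_star f t" unfolding d_star_def using x by (intro SUP_upper) auto
  finally show ?thesis .
qed

lemma exists_apply_pos_if_d_star_pos:
  fixes f :: "'a::real_normed_vector \<Rightarrow>\<^sub>L real"
  assumes "norm f = 1" "t \<le> 4" "0 < d_star f t"
  shows "\<exists>x. norm x = 1 \<and> 0 < s_star f x t \<and> 0 < blinfun_apply f x"
proof -
  obtain x where x: "norm x = 1" "0 < s_star f x t"
    using assms(3) unfolding d_star_def by (auto simp: less_SUP_iff)
  then have "blinfun_apply f x \<noteq> 0"
    using assms(1,2) by (intro blinfun_apply_neq_0_if_s_star_pos)
  then consider "0 < blinfun_apply f x" | "0 < blinfun_apply f (- x)" by fastforce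
  then show ?thesis
  proof cases
    case 1
    then show ?thesis using x by blast
  next
    case 2
    moreover have "norm (- x) = 1" "0 < s_star f (- x) t" using x by (simp_all add: s_star_uminus)
    ultimately show ?thesis by blast
  qed
qed

lemma w_star_denting_if_d_star_pos:
  fixes f :: "'a::real_normed_vector \<Rightarrow>\<^sub>L real"
  assumes f: "norm f = 1" and d: "\<And>t. 0 < t \<Longrightarrow> t < 2 \<Longrightarrow> 0 < d_star f t"
  shows "w_star_denting f"
  unfolding w_star_denting_def
proof (intro conjI allI impI f)
  fix \<epsilon> :: real assume "0 < \<epsilon>"
  define t where "t = min (\<epsilon> / 4) 1"
  have t: "0 < t" "t \<le> 1" "2 * t < \<epsilon>" using \<open>0 < \<epsilon>\<close> by (auto simp: t_def)
  have "0 < d_star f t" using d t by simp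
  moreover have "t \<le> 4" using t by simp
  ultimately obtain x where x: "norm x = 1" "0 < s_star f x t" "0 < blinfun_apply f x"
    using exists_apply_pos_if_d_star_pos[OF f] by blast
  obtain r where r: "0 < r" "ereal r < s_star f x t" using ereal_dense2[OF x(2)] by force
  define s where "s = min r (t / 4)"
  have s: "0 < s" "s \<le> t / 4" "ereal s \<le> s_star f x t"
    using r t by (auto simp: s_def min_le_iff_disj)
  define \<alpha> where "\<alpha> = blinfun_apply f x * (1 - s)"
  have "blinfun_apply f x \<le> 1" using blinfun_apply_le_norm[of f x] f x(1) by simp
  moreover have "\<alpha> < blinfun_apply f x" using x(3) s(1) by (simp add: \<alpha>_def)
  ultimately have "\<alpha> < 1" "f \<in> wslice x \<alpha>" using f by (simp_all add: wslice_def)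
  moreover have "0 < \<alpha>" using x(3) s t by (simp add: \<alpha>_def)
  moreover have "diameter (wslice x \<alpha>) < \<epsilon>"
    using diameter_wslice_lt[OF x(1) f x(3) t(1) s] t(3) by (simp add: \<alpha>_def)
  ultimately show "\<exists>x \<alpha>. norm x = 1 \<and> 0 < \<alpha> \<and> \<alpha> < 1 \<and> f \<in> wslice x \<alpha> \<and> diameter (wslice x \<alpha>) < \<epsilon>"
    using x(1) by blast
qed

theorem mainTheorem3:
  shows "(\<forall>(x::'a::banach) (f::'a \<Rightarrow>\<^sub>L real) t.
            norm x = 1 \<and> norm f = 1 \<and> blinfun_apply f x > 0 \<and> 0 < t \<and> t < 2 \<and>
            0 < s_star f x t \<and> s_star f x t < \<infinity> \<longrightarrow>
            diameter (wslice x (blinfun_apply f x * (1 - real_of_ereal (s_star f x t)))) < 2 * t)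
       \<and> (\<forall>f::'a \<Rightarrow>\<^sub>L real. norm f = 1 \<longrightarrow>
            (w_star_denting f \<longleftrightarrow> (\<forall>t. 0 < t \<and> t < 2 \<longrightarrow> d_star f t > 0)))"
proof (intro conjI allI impI)
  fix x :: 'a and f :: "'a \<Rightarrow>\<^sub>L real" and t :: real
  assume H: "norm x = 1 \<and> norm f = 1 \<and> blinfun_apply f x > 0 \<and> 0 < t \<and> t < 2 \<and>
    0 < s_star f x t \<and> s_star f x t < \<infinity>"
  obtain s where s: "s_star f x t = ereal s" using H by (cases "s_star f x t") auto
  have "s \<le> t / 4" using s_star_le_quarter[of f t x] H by (simp add: s)
  with H s show "diameter (wslice x (blinfun_apply f x * (1 - real_of_ereal (s_star f x t)))) < 2 * t"
    using diameter_wslice_lt[of x f t s] by simp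
next
  fix f :: "'a \<Rightarrow>\<^sub>L real" assume "norm f = 1"
  then show "w_star_denting f \<longleftrightarrow> (\<forall>t. 0 < t \<and> t < 2 \<longrightarrow> d_star f t > 0)"
    using d_star_pos_if_w_star_denting w_star_denting_if_d_star_pos by blast
qed

end
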